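(* Assume the Bellman setting below and hypotheses (H1)–(H4). For each $i$ let $\mathcal P_i'$ be a nonempty subset of $\mathcal P_i$ and put $\mathcal P'=\mathcal P_0'\times\cdots\times\mathcal P_M'$. Suppose $A(P)$ is nonsingular for every $P\in\mathcal P'$, and that for every $U\in\mathbb R^{M+1}$, $H(U;\mathcal P)\le0$ whenever $H(U;\mathcal P')=0$, where $H(U;\mathcal Q)=\sup_{P\in\mathcal Q}\{-A(P)U+y(P)\}$. Then every sequence $(U^\ell)_\ell$ produced by $\epsilon$-policy iteration on $\mathcal P'$ converges to the unique solution of the Bellman problem $H(U;\mathcal P)=0$.
   Context: Bellman setting: Let $M\ge 0$ be an integer and $\mathcal P=\mathcal P_0\times\cdots\times\mathcal P_M$ a product of nonempty sets; write $P=(P_0,\dots,P_M)\in\mathcal P$. Let $A:\mathcal P\to\mathbb R^{(M+1)\times(M+1)}$ and $y:\mathcal P\to\mathbb R^{M+1}$ be row-decoupled: for each $i$, the $i$-th row of $A(P)$ and the $i$-th entry of $y(P)$ depend only on $P_i$. Inequalities between vectors are entrywise and suprema of families of vectors are entrywise. $\vec e=(1,\dots,1)^\top$. Row $i$ of a matrix $(a_{ij})$ is strictly diagonally dominant (s.d.d.) if $|a_{ii}|>\sum_{j\ne i}|a_{ij}|$, weakly diagonally dominant (w.d.d.) if $|a_{ii}|\ge\sum_{j\ne i}|a_{ij}|$; a matrix is w.d.d. if all rows are. A Z-matrix is a real matrix with nonpositive off-diagonal entries. (H1): $P\mapsto A(P)^{-1}$ is bounded on $\{P: A(P)\text{ nonsingular}\}$.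 (H2): $A$ and $y$ are bounded. (H3): for each $P$, $A(P)$ is a w.d.d. Z-matrix with nonnegative diagonal entries, and $[A(P)]_{ii}\le1$ whenever row $i$ of $A(P)$ is not s.d.d. Define $[\hat y(P)]_i=[y(P)]_i$ if row $i$ of $A(P)$ is not s.d.d. and $-\infty$ otherwise, and $[\mathbb M X]_i=\sup_{P\in\mathcal P}\{(1-[A(P)]_{ii})X_i-\sum_{j\ne i}[A(P)]_{ij}X_j+[\hat y(P)]_i\}$ for vectors with entries in $[-\infty,\infty)$, with conventions $0\cdot(-\infty)=0$ and any sum containing $-\infty$ equals $-\infty$; $\mathbb M^0=I$, $\mathbb M^k=\mathbb M\circ\mathbb M^{k-1}$. (H4): for each $U\in\mathbb R^{M+1}$ and each $i$ there exist integers $0\le m_1<m_2$ with $[\mathbb M^{m_1}U]_i>[\mathbb M^{m_2}U]_i$. $\epsilon$-policy iteration on $\mathcal Q=\mathcal Q_0\times\cdots\times\mathcal Q_M$: pick any $U^0$ and positive $(\epsilon^\ell)_{\ell\ge1}$ with $\sum\epsilon^\ell<\infty$; for $\ell\ge1$ pick $P^\ell\in\mathcal Q$ with $-A(P^\ell)U^{\ell-1}+y(P^\ell)+\epsilon^\ell\vec e\ge\sup_{P\in\mathcal Q}\{-A(P)U^{\ell-1}+y(P)\}$ and let $U^\ell$ solve $A(P^\ell)U^\ell=y(P^\ell)$. *)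

theory Defs
  imports "HOL-Analysis.Analysis"
begin

text \<open>Vectors in R^(M+1) are rendered as real^'i for a finite index type 'i
  (so M+1 = CARD('i)); matrices as real^'i^'i.  A policy P = (P_0,...,P_M) is a
  function 'i => 'p, and the product set P_0 x ... x P_M is Pi UNIV PP.\<close>

definition sdd_row :: "real^'i^'i \<Rightarrow> 'i::finite \<Rightarrow> bool" where
  "sdd_row B i \<longleftrightarrow> \<bar>B $ i $ i\<bar> > (\<Sum>j\<in>UNIV - {i}. \<bar>B $ i $ j\<bar>)"

definition wdd_row :: "real^'i^'i \<Rightarrow> 'i::finite \<Rightarrow> bool" where
  "wdd_row B i \<longleftrightarrow> \<bar>B $ i $ i\<bar> \<ge> (\<Sum>j\<in>UNIV - {i}. \<bar>B $ i $ j\<bar>)"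

definition wdd :: "real^'i^'i \<Rightarrow> bool" where
  "wdd B \<longleftrightarrow> (\<forall>i::'i::finite. wdd_row B i)"

definition Z_matrix :: "real^'i^'i \<Rightarrow> bool" where
  "Z_matrix B \<longleftrightarrow> (\<forall>i j::'i::finite. i \<noteq> j \<longrightarrow> B $ i $ j \<le> 0)"

definition row_decoupled ::
  "('i::finite \<Rightarrow> 'p set) \<Rightarrow> (('i \<Rightarrow> 'p) \<Rightarrow> real^'i^'i) \<Rightarrow> (('i \<Rightarrow> 'p) \<Rightarrow> real^'i) \<Rightarrow> bool" where
  "row_decoupled PP A y \<longleftrightarrow>
     (\<forall>P\<in>Pi UNIV PP. \<forall>Q\<in>Pi UNIV PP. \<forall>i. P i = Q i \<longrightarrow> A P $ i = A Q $ i \<and> y P $ i = y Q $ i)"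

definition Hop ::
  "(('i::finite \<Rightarrow> 'p) \<Rightarrow> real^'i^'i) \<Rightarrow> (('i \<Rightarrow> 'p) \<Rightarrow> real^'i) \<Rightarrow> ('i \<Rightarrow> 'p) set \<Rightarrow> real^'i \<Rightarrow> real^'i" where
  "Hop A y Q U = (\<chi> i. SUP P\<in>Q. (- (A P *v U) + y P) $ i)"

text \<open>The operator M on vectors with entries in [-inf,inf) (ereal-valued).
  If row i of A(P) is s.d.d. then yhat_i = -inf and the whole term is -inf
  (convention: any sum containing -inf is -inf).  Otherwise the term is
  (1 - a_ii) X_i - sum_{j<>i} a_ij X_j + y_i, with ereal arithmetic
  (where 0 * (-inf) = 0).\<close>
definition Mterm :: "real^'i^'i \<Rightarrow> real^'i \<Rightarrow> ('i::finite \<Rightarrow> ereal) \<Rightarrow> 'i \<Rightarrow> ereal" where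
  "Mterm B v X i =
     (if sdd_row B i then -\<infinity>
      else ereal (1 - B $ i $ i) * X i + (\<Sum>j\<in>UNIV - {i}. ereal (- B $ i $ j) * X j) + ereal (v $ i))"

definition Mop ::
  "('i::finite \<Rightarrow> 'p set) \<Rightarrow> (('i \<Rightarrow> 'p) \<Rightarrow> real^'i^'i) \<Rightarrow> (('i \<Rightarrow> 'p) \<Rightarrow> real^'i)
    \<Rightarrow> ('i \<Rightarrow> ereal) \<Rightarrow> ('i \<Rightarrow> ereal)" where
  "Mop PP A y X = (\<lambda>i. SUP P\<in>Pi UNIV PP. Mterm (A P) (y P) X i)"

definition ones :: "real^'i::finite" where
  "ones = (\<chi> i. 1)"

end

theory Submission
  imports Defs
begin

text \<open>A w.d.d. Z-matrix with nonnegative diagonal is nonsingular exactly when it has no closed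
  class, i.e. no nonempty set of non-s.d.d. rows with vanishing entries outside the set; it is then
  monotone (\<open>B x \<ge> 0\<close> implies \<open>x \<ge> 0\<close>). If policies arbitrarily close to optimal for a
  subsolution \<open>W\<close> shared a closed class, the operator \<open>\<M>\<close> would fix \<open>W\<close> on that class,
  contradicting (H4). So near-optimal policies are monotone, with inverses bounded by (H1), which
  gives a comparison principle and hence uniqueness.
  The \<open>\<epsilon>\<close>-policy iterates are bounded, and by monotonicity each step lowers them by at most a
  multiple of \<open>\<epsilon>\<^sup>\<ell>\<close>; as \<open>\<Sum> \<epsilon>\<^sup>\<ell> < \<infinity>\<close> they converge. The limit solves
  \<open>H(U; \<P>') = 0\<close>, so \<open>H(U; \<P>) \<le> 0\<close> by hypothesis, while \<open>H(U; \<P>') \<le> H(U; \<P>)\<close>.\<close>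

definition wdd_Z_matrix :: "real^'i^'i \<Rightarrow> bool" where
  "wdd_Z_matrix B \<longleftrightarrow> wdd B \<and> Z_matrix B \<and> (\<forall>i::'i::finite. 0 \<le> B $ i $ i)"

definition closed_class :: "real^'i^'i \<Rightarrow> 'i::finite set \<Rightarrow> bool" where
  "closed_class B T \<longleftrightarrow> T \<noteq> {} \<and> (\<forall>i\<in>T. \<not> sdd_row B i \<and> (\<forall>j. j \<notin> T \<longrightarrow> B $ i $ j = 0))"

lemma matrix_vector_mult_nth: "(B *v x) $ i = (\<Sum>j\<in>UNIV. B $ i $ j * x $ j)"
  by (simp add: matrix_vector_mult_def)

lemma abs_matrix_vector_mult_nth_le:
  fixes B :: "real^'n::finite^'m"
  assumes "\<And>j. \<bar>B $ i $ j\<bar> \<le> c"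
  shows "\<bar>(B *v z) $ i\<bar> \<le> c * (\<Sum>j\<in>UNIV. \<bar>z $ j\<bar>)"
proof -
  have "\<bar>(B *v z) $ i\<bar> \<le> (\<Sum>j\<in>UNIV. \<bar>B $ i $ j * z $ j\<bar>)"
    unfolding matrix_vector_mult_nth by (rule sum_abs)
  also have "\<dots> \<le> (\<Sum>j\<in>UNIV. c * \<bar>z $ j\<bar>)"
    by (rule sum_mono) (simp add: abs_mult assms mult_right_mono)
  finally show ?thesis by (simp add: sum_distrib_left)
qed

lemma matrix_inv_inverse:
  fixes B :: "'a::field^'n::finite^'n"
  assumes "invertible B"
  shows matrix_inv_right: "B ** matrix_inv B = mat 1"
    and matrix_inv_left: "matrix_inv B ** B = mat 1"
proof -
  have "\<exists>B'. B ** B' = mat 1 \<and> B' ** B = mat 1"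
    using assms by (simp add: invertible_def)
  then have "B ** matrix_inv B = mat 1 \<and> matrix_inv B ** B = mat 1"
    unfolding matrix_inv_def by (rule someI_ex)
  then show "B ** matrix_inv B = mat 1" "matrix_inv B ** B = mat 1" by auto
qed

lemma bounded_image_entry_bound:
  fixes f :: "'a \<Rightarrow> real^'n::finite^'m::finite"
  assumes "bounded (f ` S)"
  obtains c where "\<And>x i j. x \<in> S \<Longrightarrow> \<bar>f x $ i $ j\<bar> \<le> c"
proof -
  obtain c where c: "\<And>x. x \<in> S \<Longrightarrow> norm (f x) \<le> c"
    using assms unfolding bounded_iff by blast
  have "\<bar>f x $ i $ j\<bar> \<le> c" if "x \<in> S" for x i j
    using component_le_norm_cart[of "f x $ i" j]
      Finite_Cartesian_Product.norm_nth_le[where x="f x" and i=i] c[OF that]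
    by linarith
  then show thesis by (rule that)
qed

lemma bounded_image_component_bound:
  fixes f :: "'a \<Rightarrow> real^'n::finite"
  assumes "bounded (f ` S)"
  obtains c where "\<And>x i. x \<in> S \<Longrightarrow> \<bar>f x $ i\<bar> \<le> c"
proof -
  obtain c where c: "\<And>x. x \<in> S \<Longrightarrow> norm (f x) \<le> c"
    using assms unfolding bounded_iff by blast
  have "\<bar>f x $ i\<bar> \<le> c" if "x \<in> S" for x i
    using component_le_norm_cart[of "f x" i] c[OF that] by linarith
  then show thesis by (rule that)
qed

lemma wdd_Z_matrix_row_sum:
  assumes "wdd_Z_matrix B"
  shows wdd_Z_matrix_row_sum_nonneg: "0 \<le> (\<Sum>j\<in>UNIV. B $ i $ j)"
    and wdd_Z_matrix_sdd_row_iff: "sdd_row B i \<longleftrightarrow> 0 < (\<Sum>j\<in>UNIV. B $ i $ j)"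
proof -
  have split: "(\<Sum>j\<in>UNIV. B $ i $ j) = B $ i $ i + (\<Sum>j\<in>UNIV - {i}. B $ i $ j)"
    by (simp add: sum.remove)
  have diag: "\<bar>B $ i $ i\<bar> = B $ i $ i"
    using assms by (simp add: wdd_Z_matrix_def)
  have off_diag: "(\<Sum>j\<in>UNIV - {i}. \<bar>B $ i $ j\<bar>) = - (\<Sum>j\<in>UNIV - {i}. B $ i $ j)"
    using assms by (auto simp: wdd_Z_matrix_def Z_matrix_def sum_negf[symmetric] intro!: sum.cong)
  have "wdd_row B i"
    using assms by (simp add: wdd_Z_matrix_def wdd_def)
  then show "0 \<le> (\<Sum>j\<in>UNIV. B $ i $ j)"
    unfolding wdd_row_def diag off_diag split by linarith
  show "sdd_row B i \<longleftrightarrow> 0 < (\<Sum>j\<in>UNIV. B $ i $ j)"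
    unfolding sdd_row_def diag off_diag split by linarith
qed

text \<open>If some entry of \<open>x\<close> is negative, the indices where \<open>x\<close> attains its minimum form a
  closed class.\<close>
lemma wdd_Z_matrix_nonneg_if_no_closed_class:
  fixes B :: "real^'i::finite^'i"
  assumes B: "wdd_Z_matrix B" and no_class: "\<And>T. \<not> closed_class B T" and Bx: "0 \<le> B *v x"
  shows "0 \<le> x"
proof (rule ccontr)
  assume "\<not> 0 \<le> x"
  define m where "m = Min (range (\<lambda>k. x $ k))"
  have m_le: "m \<le> x $ k" for k
    unfolding m_def by simp
  obtain i where "x $ i < 0"
    using \<open>\<not> 0 \<le> x\<close> by (auto simp: less_eq_vec_def not_le)
  then have "m < 0"
    using m_le[of i] by linarith
  have "m \<in> range (\<lambda>k. x $ k)"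
    unfolding m_def by (rule Min_in) auto
  then have "{k. x $ k = m} \<noteq> {}" by auto
  moreover have "\<not> sdd_row B k \<and> (\<forall>j. j \<notin> {k. x $ k = m} \<longrightarrow> B $ k $ j = 0)"
    if xk: "x $ k = m" for k
  proof -
    have terms_nonpos: "B $ k $ j * (x $ j - m) \<le> 0" for j
    proof (cases "j = k")
      case False
      then have "B $ k $ j \<le> 0"
        using B by (simp add: wdd_Z_matrix_def Z_matrix_def)
      then show ?thesis using m_le[of j] by (simp add: mult_nonpos_nonneg)
    qed (simp add: xk)
    have "(B *v x) $ k = (\<Sum>j\<in>UNIV. B $ k $ j) * m + (\<Sum>j\<in>UNIV. B $ k $ j * (x $ j - m))"
      unfolding matrix_vector_mult_nth
      by (simp add: right_diff_distrib sum_subtractf sum_distrib_right)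
    moreover have "0 \<le> (B *v x) $ k"
      using Bx by (simp add: less_eq_vec_def)
    moreover have "(\<Sum>j\<in>UNIV. B $ k $ j) * m \<le> 0"
      using wdd_Z_matrix_row_sum_nonneg[OF B] \<open>m < 0\<close> by (simp add: mult_nonneg_nonpos)
    moreover have "(\<Sum>j\<in>UNIV. B $ k $ j * (x $ j - m)) \<le> 0"
      using terms_nonpos by (simp add: sum_nonpos)
    ultimately have row_sum: "(\<Sum>j\<in>UNIV. B $ k $ j) * m = 0"
      and terms: "(\<Sum>j\<in>UNIV. B $ k $ j * (x $ j - m)) = 0"
      by linarith+
    have "B $ k $ j = 0" if "x $ j \<noteq> m" for j
    proof -
      have "(\<Sum>j\<in>UNIV. - (B $ k $ j * (x $ j - m))) = 0"
        using terms by (simp add: sum_negf)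
      then have "B $ k $ j * (x $ j - m) = 0"
        using terms_nonpos by (subst (asm) sum_nonneg_eq_0_iff) auto
      then show ?thesis using that by simp
    qed
    then show ?thesis
      using row_sum \<open>m < 0\<close> wdd_Z_matrix_sdd_row_iff[OF B, of k] by auto
  qed
  ultimately have "closed_class B {k. x $ k = m}"
    unfolding closed_class_def by blast
  then show False using no_class by blast
qed

lemma wdd_Z_matrix_invertible_if_no_closed_class:
  fixes B :: "real^'i::finite^'i"
  assumes B: "wdd_Z_matrix B" and no_class: "\<And>T. \<not> closed_class B T"
  shows "invertible B"
proof -
  have "x = 0" if "B *v x = 0" for x
  proof -
    have "B *v (- x) = 0"
      using that by (simp add: vec_eq_iff matrix_vector_mult_nth sum_negf)
    then have "0 \<le> - x" and "0 \<le> x"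
      using that wdd_Z_matrix_nonneg_if_no_closed_class[OF B no_class, of "- x"]
        wdd_Z_matrix_nonneg_if_no_closed_class[OF B no_class, of x] by simp_all
    then show ?thesis
      by (simp add: order_antisym)
  qed
  then have "\<exists>B'. B' ** B = mat 1"
    by (simp add: matrix_left_invertible_ker)
  then show ?thesis
    by (simp add: invertible_left_inverse)
qed

text \<open>Replacing the rows outside \<open>T\<close> by unit rows gives a matrix which is still invertible
  (the \<open>T \<times> T\<close> block of \<open>B\<^sup>-\<^sup>1\<close> inverts its \<open>T \<times> T\<close> block) but annihilates the indicator
  vector of \<open>T\<close>, as the rows in \<open>T\<close> have sum zero.\<close>
lemma wdd_Z_matrix_no_closed_class_if_invertible:
  fixes B :: "real^'i::finite^'i"
  assumes B: "wdd_Z_matrix B" and inv: "invertible B"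
  shows "\<not> closed_class B T"
proof
  assume "closed_class B T"
  then have "T \<noteq> {}" and not_sdd: "\<And>i. i \<in> T \<Longrightarrow> \<not> sdd_row B i"
    and outside: "\<And>i j. i \<in> T \<Longrightarrow> j \<notin> T \<Longrightarrow> B $ i $ j = 0"
    by (auto simp: closed_class_def)
  define C where "C = matrix_inv B"
  define B' :: "real^'i^'i"
    where "B' = (\<chi> i j. if i \<in> T then B $ i $ j else if i = j then 1 else 0)"
  define C' :: "real^'i^'i"
    where "C' = (\<chi> i j. if i \<in> T \<and> j \<in> T then C $ i $ j else if i = j then 1 else 0)"
  define v :: "real^'i" where "v = (\<chi> j. if j \<in> T then 1 else 0)"
  have "(B' ** C') $ i $ k = mat 1 $ i $ k" for i k
  proof (cases "i \<in> T")
    case False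
    then show ?thesis
      by (simp add: B'_def C'_def matrix_matrix_mult_def mat_def if_distrib[of "\<lambda>x. x * _"]
          cong: if_cong)
  next
    case True
    have "(B' ** C') $ i $ k = (\<Sum>j\<in>UNIV. B $ i $ j * (if k \<in> T then C $ j $ k else if j = k then 1 else 0))"
      unfolding matrix_matrix_mult_def B'_def C'_def
      using True outside[OF True] by (auto intro!: sum.cong)
    also have "\<dots> = mat 1 $ i $ k"
    proof (cases "k \<in> T")
      case True
      then show ?thesis
        using matrix_inv_right[OF inv] by (simp add: C_def vec_eq_iff matrix_matrix_mult_def)
    next
      case False
      then show ?thesis
        using outside[OF \<open>i \<in> T\<close> False] \<open>i \<in> T\<close>
        by (auto simp: mat_def if_distrib[of "\<lambda>x. _ * x"] cong: if_cong)
    qed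
    finally show ?thesis .
  qed
  then have "B' ** C' = mat 1"
    by (simp add: vec_eq_iff)
  then have "C' ** B' = mat 1"
    using matrix_left_right_inverse by blast
  have "(B' *v v) $ i = 0" for i
  proof (cases "i \<in> T")
    case False
    then show ?thesis
      by (simp add: B'_def v_def matrix_vector_mult_nth if_distrib[of "\<lambda>x. x * _"] cong: if_cong)
  next
    case True
    have "(B' *v v) $ i = (\<Sum>j\<in>UNIV. B $ i $ j)"
      unfolding matrix_vector_mult_nth B'_def v_def
      using True outside[OF True] by (auto intro!: sum.cong)
    then show ?thesis
      using wdd_Z_matrix_row_sum[OF B, of i] not_sdd[OF True] by linarith
  qed
  then have "B' *v v = 0"
    by (simp add: vec_eq_iff)
  then have "(C' ** B') *v v = 0"
    by (simp add: matrix_vector_mul_assoc[symmetric])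
  then have "v = 0"
    using \<open>C' ** B' = mat 1\<close> by simp
  then show False
    using \<open>T \<noteq> {}\<close> by (auto simp: vec_eq_iff v_def split: if_splits)
qed

lemma wdd_Z_matrix_invertible_iff:
  fixes B :: "real^'i::finite^'i"
  assumes "wdd_Z_matrix B"
  shows "invertible B \<longleftrightarrow> (\<forall>T. \<not> closed_class B T)"
  using assms wdd_Z_matrix_invertible_if_no_closed_class wdd_Z_matrix_no_closed_class_if_invertible
  by blast

lemma wdd_Z_matrix_invertible_nonneg:
  fixes B :: "real^'i::finite^'i"
  assumes "wdd_Z_matrix B" "invertible B" "0 \<le> B *v x"
  shows "0 \<le> x"
  using assms wdd_Z_matrix_invertible_iff wdd_Z_matrix_nonneg_if_no_closed_class by blast

lemma Mterm_real_eq: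
  fixes B :: "real^'i::finite^'i"
  shows "(1 - B $ i $ i) * W $ i + (\<Sum>j\<in>UNIV - {i}. (- B $ i $ j) * W $ j) + v $ i
    = W $ i + (- (B *v W) + v) $ i"
proof -
  have "(B *v W) $ i = B $ i $ i * W $ i + (\<Sum>j\<in>UNIV - {i}. B $ i $ j * W $ j)"
    unfolding matrix_vector_mult_nth by (simp add: sum.remove)
  then show ?thesis
    by (simp add: algebra_simps sum_negf)
qed

lemma Mterm_le:
  fixes B :: "real^'i::finite^'i"
  assumes B: "wdd_Z_matrix B" and diag: "\<not> sdd_row B i \<Longrightarrow> B $ i $ i \<le> 1"
    and X: "\<And>j. X j \<le> ereal (W $ j)"
  shows "Mterm B v X i \<le> ereal (W $ i + (- (B *v W) + v) $ i)"
proof (cases "sdd_row B i")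
  case False
  have diag_term: "ereal (1 - B $ i $ i) * X i \<le> ereal ((1 - B $ i $ i) * W $ i)"
    using ereal_mult_left_mono[OF X[of i], of "ereal (1 - B $ i $ i)"] diag[OF False] by simp
  have off_diag_term: "ereal (- B $ i $ j) * X j \<le> ereal ((- B $ i $ j) * W $ j)"
    if "j \<in> UNIV - {i}" for j
  proof -
    have "B $ i $ j \<le> 0"
      using B that by (auto simp: wdd_Z_matrix_def Z_matrix_def)
    then show ?thesis
      using ereal_mult_left_mono[OF X[of j], of "ereal (- B $ i $ j)"] by simp
  qed
  have "Mterm B v X i \<le> ereal ((1 - B $ i $ i) * W $ i)
      + (\<Sum>j\<in>UNIV - {i}. ereal ((- B $ i $ j) * W $ j)) + ereal (v $ i)"
    unfolding Mterm_def if_not_P[OF False]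
    by (intro add_mono diag_term order_refl sum_mono off_diag_term)
  also have "\<dots> = ereal (W $ i + (- (B *v W) + v) $ i)"
    using Mterm_real_eq[of B i W v] by simp
  finally show ?thesis .
qed (simp add: Mterm_def)

lemma Mterm_ge:
  fixes B :: "real^'i::finite^'i"
  assumes B: "wdd_Z_matrix B" and not_sdd: "\<not> sdd_row B i" and diag: "B $ i $ i \<le> 1"
    and X: "\<And>j. j = i \<or> B $ i $ j \<noteq> 0 \<Longrightarrow> ereal (W $ j) \<le> X j"
  shows "ereal (W $ i + (- (B *v W) + v) $ i) \<le> Mterm B v X i"
proof -
  have diag_term: "ereal ((1 - B $ i $ i) * W $ i) \<le> ereal (1 - B $ i $ i) * X i"
    using ereal_mult_left_mono[OF X, of i "ereal (1 - B $ i $ i)"] diag by simp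
  have off_diag_term: "ereal ((- B $ i $ j) * W $ j) \<le> ereal (- B $ i $ j) * X j"
    if "j \<in> UNIV - {i}" for j
  proof (cases "B $ i $ j = 0")
    case False
    have "B $ i $ j \<le> 0"
      using B that by (auto simp: wdd_Z_matrix_def Z_matrix_def)
    then show ?thesis
      using ereal_mult_left_mono[OF X, of j "ereal (- B $ i $ j)"] False by simp
  qed (simp add: zero_ereal_def[symmetric])
  have "ereal (W $ i + (- (B *v W) + v) $ i) = ereal ((1 - B $ i $ i) * W $ i)
      + (\<Sum>j\<in>UNIV - {i}. ereal ((- B $ i $ j) * W $ j)) + ereal (v $ i)"
    using Mterm_real_eq[of B i W v] by simp
  also have "\<dots> \<le> Mterm B v X i"
    unfolding Mterm_def if_not_P[OF not_sdd]
    by (intro add_mono diag_term order_refl sum_mono off_diag_term)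
  finally show ?thesis .
qed

lemma ex_uniform_witness_finite:
  fixes R :: "real \<Rightarrow> 'b::finite \<Rightarrow> bool"
  assumes ex: "\<And>e. 0 < e \<Longrightarrow> \<exists>b. R e b"
    and mono: "\<And>e e' b. R e b \<Longrightarrow> e \<le> e' \<Longrightarrow> R e' b"
  shows "\<exists>b. \<forall>e>0. R e b"
proof (rule ccontr)
  assume "\<not> ?thesis"
  then obtain f where f: "\<And>b. 0 < f b" "\<And>b. \<not> R (f b) b"
    by (metis not_less_iff_gr_or_eq)
  have "0 < Min (range f)"
    using f(1) by simp
  then obtain b where "R (Min (range f)) b"
    using ex by blast
  then have "R (f b) b"
    by (rule mono) simp
  then show False
    using f(2) by blast
qed

lemma almost_increasing_convergent:
  fixes u d :: "nat \<Rightarrow> real"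
  assumes step: "\<And>l. u l - d l \<le> u (Suc l)" and d: "\<And>l. 0 \<le> d l" "summable d"
    and bounded: "\<And>l. u l \<le> c"
  shows "convergent u"
proof -
  define g where "g l = u l + (\<Sum>k<l. d k)" for l
  have "incseq g"
  proof (rule incseq_SucI)
    show "g l \<le> g (Suc l)" for l
      using step[of l] by (simp add: g_def)
  qed
  moreover have "g l \<le> c + suminf d" for l
    using bounded[of l] sum_le_suminf[OF d(2), of "{..<l}"] d(1) by (simp add: g_def add_mono)
  ultimately obtain L where "g \<longlonglongrightarrow> L"
    using incseq_convergent by blast
  then have "(\<lambda>l. g l - (\<Sum>k<l. d k)) \<longlonglongrightarrow> L - suminf d"
    by (intro tendsto_diff summable_LIMSEQ d(2))
  then show ?thesis
    by (auto simp: g_def convergent_def)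
qed

lemma nonpos_if_le_mult_small:
  fixes x c e0 :: real
  assumes "0 < e0" and "\<And>e. 0 < e \<Longrightarrow> e \<le> e0 \<Longrightarrow> x \<le> e * c"
  shows "x \<le> 0"
proof -
  have "((\<lambda>e. e * c) \<longlongrightarrow> 0 * c) (at_right 0)"
    by (intro tendsto_intros)
  moreover have "\<forall>\<^sub>F e in at_right 0. x \<le> e * c"
    using assms by (auto simp: eventually_at_right_field intro!: exI[of _ e0])
  ultimately show ?thesis
    using tendsto_lowerbound[of "\<lambda>e. e * c" "0 * c" "at_right (0::real)" x] by simp
qed

lemma Hop_nth: "Hop A y Q X $ i = (SUP P\<in>Q. (- (A P *v X) + y P) $ i)"
  by (simp add: Hop_def)

locale bellman_problem =
  fixes PP :: "'i::finite \<Rightarrow> 'p set"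
    and A :: "('i \<Rightarrow> 'p) \<Rightarrow> real^'i^'i"
    and y :: "('i \<Rightarrow> 'p) \<Rightarrow> real^'i"
    and cA cy cinv :: real
  assumes nonempty: "\<And>i. PP i \<noteq> {}"
    and decoupled: "row_decoupled PP A y"
    and A_bound: "\<And>P i j. P \<in> Pi UNIV PP \<Longrightarrow> \<bar>A P $ i $ j\<bar> \<le> cA"
    and y_bound: "\<And>P i. P \<in> Pi UNIV PP \<Longrightarrow> \<bar>y P $ i\<bar> \<le> cy"
    and inv_bound: "\<And>P i j. P \<in> Pi UNIV PP \<Longrightarrow> invertible (A P) \<Longrightarrow> \<bar>matrix_inv (A P) $ i $ j\<bar> \<le> cinv"
    and wdd_Z: "\<And>P. P \<in> Pi UNIV PP \<Longrightarrow> wdd_Z_matrix (A P)"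
    and diag_le_1: "\<And>P i. P \<in> Pi UNIV PP \<Longrightarrow> \<not> sdd_row (A P) i \<Longrightarrow> A P $ i $ i \<le> 1"
    and H4: "\<And>(V::real^'i) i. \<exists>m1 m2::nat. m1 < m2 \<and>
               (Mop PP A y ^^ m1) (\<lambda>j. ereal (V $ j)) i > (Mop PP A y ^^ m2) (\<lambda>j. ereal (V $ j)) i"
begin

abbreviation policies :: "('i \<Rightarrow> 'p) set" where
  "policies \<equiv> Pi UNIV PP"

abbreviation residual :: "('i \<Rightarrow> 'p) \<Rightarrow> real^'i \<Rightarrow> real^'i" where
  "residual P X \<equiv> - (A P *v X) + y P"

lemma policies_nonempty: "policies \<noteq> {}"
  using nonempty by (simp add: PiE_eq_empty_iff)

lemma residual_nth_bdd_above:
  assumes "Q \<subseteq> policies"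
  shows "bdd_above ((\<lambda>P. residual P X $ i) ` Q)"
proof (rule bdd_aboveI2)
  fix P assume "P \<in> Q"
  then have "P \<in> policies" using assms by blast
  have "\<bar>(A P *v X) $ i\<bar> \<le> cA * (\<Sum>j\<in>UNIV. \<bar>X $ j\<bar>)"
    by (rule abs_matrix_vector_mult_nth_le) (rule A_bound[OF \<open>P \<in> policies\<close>])
  then show "residual P X $ i \<le> cA * (\<Sum>j\<in>UNIV. \<bar>X $ j\<bar>) + cy"
    using y_bound[OF \<open>P \<in> policies\<close>, of i] by simp
qed

lemma residual_le_Hop:
  assumes "Q \<subseteq> policies" "P \<in> Q"
  shows "residual P X \<le> Hop A y Q X"
  unfolding less_eq_vec_def Hop_nth
  using cSUP_upper[OF assms(2) residual_nth_bdd_above[OF assms(1)]] by blast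

lemma Hop_nth_le:
  assumes "Q \<noteq> {}" "\<And>P. P \<in> Q \<Longrightarrow> residual P X $ i \<le> c"
  shows "Hop A y Q X $ i \<le> c"
  unfolding Hop_nth using assms by (rule cSUP_least)

lemma Hop_mono_policies:
  assumes "Q \<subseteq> policies" "Q \<noteq> {}"
  shows "Hop A y Q X \<le> Hop A y policies X"
  unfolding less_eq_vec_def
proof
  fix i
  show "Hop A y Q X $ i \<le> Hop A y policies X $ i"
  proof (rule Hop_nth_le[OF assms(2)])
    fix P assume "P \<in> Q"
    then show "residual P X $ i \<le> Hop A y policies X $ i"
      using assms(1) residual_le_Hop[of policies P X] by (auto simp: less_eq_vec_def)
  qed
qed

lemma residual_nth_decoupled:
  assumes "P \<in> policies" "Q \<in> policies" "P i = Q i"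
  shows "residual P X $ i = residual Q X $ i"
proof -
  have "A P $ i = A Q $ i" "y P $ i = y Q $ i"
    using decoupled assms unfolding row_decoupled_def by blast+
  then show ?thesis
    by (simp add: matrix_vector_mult_nth)
qed

text \<open>Row decoupling lets the rows of different near-optimal policies be combined into one.\<close>
lemma exists_near_optimal_policy:
  assumes "0 < e"
  obtains P where "P \<in> policies" "\<And>i. Hop A y policies X $ i - e < residual P X $ i"
proof -
  have "\<forall>i. \<exists>Q. Q \<in> policies \<and> Hop A y policies X $ i - e < residual Q X $ i"
  proof
    fix i
    have "Hop A y policies X $ i - e < (SUP P\<in>policies. residual P X $ i)"
      using assms by (simp add: Hop_nth)
    then show "\<exists>Q. Q \<in> policies \<and> Hop A y policies X $ i - e < residual Q X $ i"
      using less_cSUP_iff[OF policies_nonempty residual_nth_bdd_above[OF order_refl], THEN iffD1]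
      by blast
  qed
  from choice[OF this] obtain Q
    where Q: "\<And>i. Q i \<in> policies" "\<And>i. Hop A y policies X $ i - e < residual (Q i) X $ i"
    by blast
  define P where "P i = Q i i" for i
  have P: "P \<in> policies"
    using Q(1) by (auto simp: P_def Pi_iff)
  have "residual P X $ i = residual (Q i) X $ i" for i
    using P Q(1) by (rule residual_nth_decoupled) (simp add: P_def)
  then show thesis
    using that[OF P] Q(2) by simp
qed

lemma Mop_iterate_closed_class:
  assumes sub: "Hop A y policies W \<le> 0"
    and classes: "\<And>e. 0 < e \<Longrightarrow> \<exists>P\<in>policies. (\<forall>i. - e \<le> residual P W $ i) \<and> closed_class (A P) T"
    and "t \<in> T"
  shows "(Mop PP A y ^^ m) (\<lambda>j. ereal (W $ j)) t = ereal (W $ t)"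
proof -
  let ?W = "\<lambda>j. ereal (W $ j)"
  have "(\<forall>j. (Mop PP A y ^^ m) ?W j \<le> ?W j) \<and> (\<forall>j\<in>T. ?W j \<le> (Mop PP A y ^^ m) ?W j)"
  proof (induction m)
    case (Suc m)
    define X where "X = (Mop PP A y ^^ m) ?W"
    have X_le: "\<And>j. X j \<le> ?W j" and X_ge: "\<And>j. j \<in> T \<Longrightarrow> ?W j \<le> X j"
      using Suc.IH by (auto simp: X_def)
    have "Mop PP A y X j \<le> ?W j" for j
      unfolding Mop_def
    proof (rule SUP_least)
      fix P assume P: "P \<in> policies"
      have "residual P W $ j \<le> Hop A y policies W $ j"
        using residual_le_Hop[OF order_refl P, of W] unfolding less_eq_vec_def by blast
      also have "\<dots> \<le> 0"
        using sub unfolding less_eq_vec_def by simp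
      finally have "residual P W $ j \<le> 0" .
      then show "Mterm (A P) (y P) X j \<le> ?W j"
        using Mterm_le[OF wdd_Z[OF P] diag_le_1[OF P] X_le, of j "y P"] by (simp add: order_trans)
    qed
    moreover have "?W j \<le> Mop PP A y X j" if "j \<in> T" for j
    proof (rule ereal_le_epsilon2)
      fix e :: real assume "0 < e"
      then obtain P where P: "P \<in> policies" "\<And>i. - e \<le> residual P W $ i" "closed_class (A P) T"
        using classes by blast
      have not_sdd: "\<not> sdd_row (A P) j" and outside: "\<And>k. k \<notin> T \<Longrightarrow> A P $ j $ k = 0"
        using P(3) \<open>j \<in> T\<close> by (auto simp: closed_class_def)
      have "ereal (W $ j - e) \<le> ereal (W $ j + residual P W $ j)"
        using P(2)[of j] by simp
      also have "\<dots> \<le> Mterm (A P) (y P) X j"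
        using X_ge outside \<open>j \<in> T\<close>
        by (intro Mterm_ge wdd_Z[OF P(1)] not_sdd diag_le_1[OF P(1) not_sdd]) blast
      also have "\<dots> \<le> Mop PP A y X j"
        unfolding Mop_def by (rule SUP_upper[OF P(1)])
      finally have "ereal (W $ j - e) + ereal e \<le> Mop PP A y X j + ereal e"
        by (rule add_right_mono)
      then show "?W j \<le> Mop PP A y X j + ereal e"
        by simp
    qed
    ultimately show ?case
      by (simp add: X_def)
  qed simp
  then show ?thesis
    using \<open>t \<in> T\<close> by (blast intro: order_antisym)
qed

lemma near_optimal_policies_invertible:
  assumes sub: "Hop A y policies W \<le> 0"
  obtains e0 where "0 < e0"
    and "\<And>P. P \<in> policies \<Longrightarrow> (\<And>i. - e0 \<le> residual P W $ i) \<Longrightarrow> invertible (A P)"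
proof -
  define R where "R e T \<longleftrightarrow> (\<exists>P\<in>policies. (\<forall>i. - e \<le> residual P W $ i) \<and> closed_class (A P) T)"
    for e T
  have "\<exists>e0>0. \<forall>P\<in>policies. (\<forall>i. - e0 \<le> residual P W $ i) \<longrightarrow> invertible (A P)"
  proof (rule ccontr)
    assume "\<not> ?thesis"
    then have "\<exists>T. R e T" if "0 < e" for e
      using that wdd_Z_matrix_invertible_iff[OF wdd_Z] unfolding R_def by blast
    moreover have "R e' T" if "R e T" "e \<le> e'" for e e' T
      using that unfolding R_def by (meson neg_le_iff_le order_trans)
    ultimately obtain T where R_T: "\<And>e. 0 < e \<Longrightarrow> R e T"
      using ex_uniform_witness_finite[of R] by blast
    have "R 1 T"
      by (rule R_T) simp
    then obtain t where "t \<in> T"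
      by (auto simp: R_def closed_class_def)
    have "(Mop PP A y ^^ m) (\<lambda>j. ereal (W $ j)) t = ereal (W $ t)" for m
      using Mop_iterate_closed_class[OF sub _ \<open>t \<in> T\<close>] R_T unfolding R_def by blast
    then show False
      using H4[of W t] by auto
  qed
  then show thesis
    using that by blast
qed

lemma policy_inverse_ones:
  assumes "P \<in> policies" "invertible (A P)"
  obtains w where "A P *v w = ones" "\<And>i. w $ i \<le> cinv * real CARD('i)"
proof
  show "A P *v (matrix_inv (A P) *v ones) = ones"
    using matrix_inv_right[OF assms(2)] by (simp add: matrix_vector_mul_assoc)
  show "(matrix_inv (A P) *v ones) $ i \<le> cinv * real CARD('i)" for i
  proof -
    have "\<bar>(matrix_inv (A P) *v ones) $ i\<bar> \<le> cinv * (\<Sum>j\<in>UNIV. \<bar>(ones :: real^'i) $ j\<bar>)"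
      by (rule abs_matrix_vector_mult_nth_le) (rule inv_bound[OF assms])
    then show ?thesis
      by (simp add: ones_def)
  qed
qed

lemma policy_monotone:
  assumes "P \<in> policies" "invertible (A P)" "0 \<le> A P *v x"
  shows "0 \<le> x"
  using wdd_Z_matrix_invertible_nonneg[OF wdd_Z[OF assms(1)] assms(2,3)] .

text \<open>For a policy \<open>P\<close> that is \<open>e\<close>-optimal for \<open>W\<close>, monotonicity of \<open>A(P)\<close> gives
  \<open>W - V \<le> e A(P)\<^sup>-\<^sup>1 \<one>\<close>; the bound on the inverses lets \<open>e\<close> tend to zero.\<close>
lemma solution_le_subsolution:
  assumes W: "Hop A y policies W = 0" and V: "Hop A y policies V \<le> 0"
  shows "W \<le> V"
proof -
  obtain e0 where "0 < e0"
    and e0: "\<And>P. P \<in> policies \<Longrightarrow> (\<And>i. - e0 \<le> residual P W $ i) \<Longrightarrow> invertible (A P)"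
    using near_optimal_policies_invertible[of W] W by auto
  have bound: "W $ k - V $ k \<le> e * (cinv * real CARD('i))" if "0 < e" "e \<le> e0" for e k
  proof -
    obtain P where P: "P \<in> policies" "\<And>i. - e < residual P W $ i"
      using exists_near_optimal_policy[OF \<open>0 < e\<close>, of W] W by auto
    have "- e0 \<le> residual P W $ i" for i
      using P(2)[of i] \<open>e \<le> e0\<close> by linarith
    then have inv: "invertible (A P)"
      using e0[OF P(1)] by blast
    obtain w where w: "A P *v w = ones" "\<And>i. w $ i \<le> cinv * real CARD('i)"
      using policy_inverse_ones[OF P(1) inv] by blast
    have "residual P V \<le> 0"
      using residual_le_Hop[OF order_refl P(1)] V by (rule order_trans)
    then have "0 \<le> A P *v (e *\<^sub>R w - (W - V))"
      using P(2) w(1)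
      by (simp add: less_eq_vec_def matrix_vector_mult_diff_distrib matrix_vector_right_distrib
          matrix_vector_mult_scaleR ones_def) (smt (verit))
    then have "0 \<le> e *\<^sub>R w - (W - V)"
      by (rule policy_monotone[OF P(1) inv])
    then have "W $ k - V $ k \<le> e * w $ k"
      by (simp add: less_eq_vec_def)
    also have "\<dots> \<le> e * (cinv * real CARD('i))"
      using w(2)[of k] \<open>0 < e\<close> by (simp add: mult_left_mono)
    finally show ?thesis .
  qed
  have "W $ k - V $ k \<le> 0" for k
    using nonpos_if_le_mult_small[OF \<open>0 < e0\<close> bound] .
  then show ?thesis
    by (simp add: less_eq_vec_def)
qed

lemma solution_unique:
  assumes "Hop A y policies W = 0" "Hop A y policies V = 0"
  shows "W = V"
  using solution_le_subsolution[of W V] solution_le_subsolution[of V W] assms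
  by (simp add: order_antisym)

lemma residual_nth_diff_le:
  assumes "P \<in> policies"
  shows "\<bar>residual P V $ i - residual P X $ i\<bar> \<le> cA * (\<Sum>j\<in>UNIV. \<bar>X $ j - V $ j\<bar>)"
proof -
  have "residual P V $ i - residual P X $ i = (A P *v (X - V)) $ i"
    by (simp add: matrix_vector_mult_diff_distrib)
  also have "\<bar>\<dots>\<bar> \<le> cA * (\<Sum>j\<in>UNIV. \<bar>(X - V) $ j\<bar>)"
    by (rule abs_matrix_vector_mult_nth_le) (rule A_bound[OF assms])
  finally show ?thesis
    by simp
qed

end

locale eps_policy_iteration = bellman_problem PP A y cA cy cinv
  for PP :: "'i::finite \<Rightarrow> 'p set" and A y cA cy cinv +
  fixes PP' :: "'i \<Rightarrow> 'p set"
    and U :: "nat \<Rightarrow> real^'i"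
    and Pol :: "nat \<Rightarrow> 'i \<Rightarrow> 'p"
    and eps :: "nat \<Rightarrow> real"
  assumes sub: "\<And>i. PP' i \<subseteq> PP i"
    and nonempty': "\<And>i. PP' i \<noteq> {}"
    and nonsing: "\<And>P. P \<in> Pi UNIV PP' \<Longrightarrow> invertible (A P)"
    and compat: "\<And>V. Hop A y (Pi UNIV PP') V = 0 \<Longrightarrow> Hop A y (Pi UNIV PP) V \<le> 0"
    and eps_pos: "\<And>l. l \<ge> 1 \<Longrightarrow> eps l > 0"
    and eps_sum: "summable (\<lambda>l. eps (Suc l))"
    and pol_in: "\<And>l. l \<ge> 1 \<Longrightarrow> Pol l \<in> Pi UNIV PP'"
    and pol_eps: "\<And>l. l \<ge> 1 \<Longrightarrow>
        - (A (Pol l) *v U (l - 1)) + y (Pol l) + eps l *\<^sub>R ones \<ge> Hop A y (Pi UNIV PP') (U (l - 1))"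
    and solve: "\<And>l. l \<ge> 1 \<Longrightarrow> A (Pol l) *v U l = y (Pol l)"
begin

abbreviation policies' :: "('i \<Rightarrow> 'p) set" where
  "policies' \<equiv> Pi UNIV PP'"

lemma policies'_subset: "policies' \<subseteq> policies"
  using sub by auto

lemma policies'_nonempty: "policies' \<noteq> {}"
  using nonempty' by (simp add: PiE_eq_empty_iff)

lemma Pol_policy: "1 \<le> l \<Longrightarrow> Pol l \<in> policies"
  using pol_in policies'_subset by blast

lemma Pol_invertible: "1 \<le> l \<Longrightarrow> invertible (A (Pol l))"
  using nonsing pol_in by blast

lemma residual_Pol_iterate: "1 \<le> l \<Longrightarrow> residual (Pol l) (U l) = 0"
  using solve by simp

lemma Hop_restricted_le_Pol:
  assumes "1 \<le> l"
  shows "Hop A y policies' (U (l - 1)) $ i \<le> residual (Pol l) (U (l - 1)) $ i + eps l"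
  using pol_eps[OF assms] by (simp add: less_eq_vec_def ones_def)

lemma cinv_nonneg: "0 \<le> cinv"
  using inv_bound[OF Pol_policy Pol_invertible, of 1] by (meson abs_ge_zero order_trans order_refl)

lemma iterate_bounded:
  assumes "1 \<le> l"
  shows "\<bar>U l $ i\<bar> \<le> cinv * (real CARD('i) * cy)"
proof -
  have "U l = matrix_inv (A (Pol l)) *v (A (Pol l) *v U l)"
    using matrix_inv_left[OF Pol_invertible[OF assms]] by (simp add: matrix_vector_mul_assoc)
  then have U: "U l = matrix_inv (A (Pol l)) *v y (Pol l)"
    using solve[OF assms] by simp
  have "\<bar>U l $ i\<bar> \<le> cinv * (\<Sum>j\<in>UNIV. \<bar>y (Pol l) $ j\<bar>)"
    unfolding U
    by (rule abs_matrix_vector_mult_nth_le) (rule inv_bound[OF Pol_policy[OF assms] Pol_invertible[OF assms]])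
  also have "\<dots> \<le> cinv * (\<Sum>j\<in>(UNIV :: 'i set). cy)"
    using y_bound[OF Pol_policy[OF assms]] cinv_nonneg by (intro mult_left_mono sum_mono) auto
  finally show ?thesis
    by simp
qed

text \<open>By \<open>\<epsilon>\<close>-optimality of the next policy \<open>P\<close>, the vector
  \<open>U\<^sup>\<ell>\<^sup>+\<^sup>1 - U\<^sup>\<ell> + \<epsilon>\<^sup>\<ell>\<^sup>+\<^sup>1 A(P)\<^sup>-\<^sup>1 \<one>\<close> is mapped by \<open>A(P)\<close> above \<open>H(U\<^sup>\<ell>; \<P>') \<ge> 0\<close>.\<close>
lemma iterate_almost_increasing:
  assumes "1 \<le> l"
  shows "U l $ i - eps (Suc l) * (cinv * real CARD('i)) \<le> U (Suc l) $ i"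
proof -
  let ?B = "A (Pol (Suc l))"
  obtain w where w: "?B *v w = ones" "\<And>i. w $ i \<le> cinv * real CARD('i)"
    using policy_inverse_ones[OF Pol_policy Pol_invertible, of "Suc l"] by auto
  have "0 \<le> ?B *v (U (Suc l) - U l + eps (Suc l) *\<^sub>R w)"
    unfolding less_eq_vec_def
  proof
    fix k
    have "residual (Pol l) (U l) $ k \<le> Hop A y policies' (U l) $ k"
      using residual_le_Hop[OF policies'_subset pol_in[OF assms]] by (simp add: less_eq_vec_def)
    also have "\<dots> \<le> residual (Pol (Suc l)) (U l) $ k + eps (Suc l)"
      using Hop_restricted_le_Pol[of "Suc l" k] by simp
    finally show "0 $ k \<le> (?B *v (U (Suc l) - U l + eps (Suc l) *\<^sub>R w)) $ k"
      using residual_Pol_iterate[OF assms] solve[of "Suc l"] w(1)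
      by (simp add: matrix_vector_mult_diff_distrib matrix_vector_right_distrib
          matrix_vector_mult_scaleR ones_def)
  qed
  then have "0 \<le> U (Suc l) - U l + eps (Suc l) *\<^sub>R w"
    using policy_monotone[OF Pol_policy[of "Suc l"] Pol_invertible[of "Suc l"]] by simp
  then have "U l $ i - eps (Suc l) * w $ i \<le> U (Suc l) $ i"
    by (simp add: less_eq_vec_def algebra_simps)
  moreover have "eps (Suc l) * w $ i \<le> eps (Suc l) * (cinv * real CARD('i))"
    using eps_pos[of "Suc l"] w(2)[of i] by (simp add: mult_left_mono)
  ultimately show ?thesis
    by linarith
qed

lemma iterates_convergent: "convergent U"
proof -
  let ?c = "cinv * real CARD('i)"
  have "convergent (\<lambda>l. U (Suc l) $ i)" for i
  proof (rule almost_increasing_convergent)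
    show "U (Suc l) $ i - eps (Suc (Suc l)) * ?c \<le> U (Suc (Suc l)) $ i" for l
      by (rule iterate_almost_increasing) simp
    show "0 \<le> eps (Suc (Suc l)) * ?c" for l
      using eps_pos[of "Suc (Suc l)"] cinv_nonneg by simp
    have "summable (\<lambda>l. eps (Suc (Suc l)))"
      using eps_sum summable_Suc_iff[of "\<lambda>l. eps (Suc l)"] by simp
    then show "summable (\<lambda>l. eps (Suc (Suc l)) * ?c)"
      by (rule summable_mult2)
    show "U (Suc l) $ i \<le> cinv * (real CARD('i) * cy)" for l
      using iterate_bounded[of "Suc l" i] by simp
  qed
  then have "convergent (\<lambda>l. U l $ i)" for i
    using convergent_Suc_iff[of "\<lambda>l. U l $ i"] by simp
  then have "(\<lambda>l. U l $ i) \<longlonglongrightarrow> lim (\<lambda>l. U l $ i)" for i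
    by (simp only: convergent_LIMSEQ_iff)
  then have "U \<longlonglongrightarrow> (\<chi> i. lim (\<lambda>l. U l $ i))"
    by (intro vec_tendstoI) simp
  then show ?thesis
    by (rule convergentI)
qed

lemma limit_solves_restricted:
  assumes "U \<longlonglongrightarrow> V"
  shows "Hop A y policies' V = 0"
proof -
  define r where "r l = (\<Sum>j\<in>UNIV. \<bar>U l $ j - V $ j\<bar>)" for l
  have "r \<longlonglongrightarrow> (\<Sum>j\<in>UNIV. \<bar>V $ j - V $ j\<bar>)"
    unfolding r_def by (intro tendsto_intros tendsto_vec_nth assms)
  then have r: "r \<longlonglongrightarrow> 0"
    by simp
  have residual_near: "\<bar>residual P V $ i - residual P (U l) $ i\<bar> \<le> cA * r l"
    if "P \<in> policies" for P i l
    unfolding r_def by (rule residual_nth_diff_le[OF that])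
  have "0 \<le> Hop A y policies' V $ i" for i
  proof (rule LIMSEQ_le_const2)
    show "(\<lambda>l. - cA * r l) \<longlonglongrightarrow> 0"
      using tendsto_mult_left[OF r, of "- cA"] by simp
    have "- cA * r l \<le> Hop A y policies' V $ i" if "1 \<le> l" for l
    proof -
      have "- cA * r l \<le> residual (Pol l) V $ i"
        using residual_near[OF Pol_policy[OF that], of i l] residual_Pol_iterate[OF that] by simp
      also have "\<dots> \<le> Hop A y policies' V $ i"
        using residual_le_Hop[OF policies'_subset pol_in[OF that]] by (simp add: less_eq_vec_def)
      finally show ?thesis .
    qed
    then show "\<exists>N. \<forall>l\<ge>N. - cA * r l \<le> Hop A y policies' V $ i"
      by blast
  qed
  moreover have "Hop A y policies' V $ i \<le> 0" for i
  proof (rule Hop_nth_le[OF policies'_nonempty])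
    fix P assume P: "P \<in> policies'"
    then have "P \<in> policies"
      using policies'_subset by blast
    define g where "g m = cA * r m + eps (Suc m) + cA * (r m + r (Suc m))" for m
    have "residual P V $ i \<le> g m" for m
    proof -
      have "residual P V $ i \<le> residual P (U m) $ i + cA * r m"
        using residual_near[OF \<open>P \<in> policies\<close>, of i m] by simp
      also have "residual P (U m) $ i \<le> Hop A y policies' (U m) $ i"
        using residual_le_Hop[OF policies'_subset P] by (simp add: less_eq_vec_def)
      also have "\<dots> \<le> residual (Pol (Suc m)) (U m) $ i + eps (Suc m)"
        using Hop_restricted_le_Pol[of "Suc m" i] by simp
      also have "residual (Pol (Suc m)) (U m) $ i \<le> cA * (r m + r (Suc m))"
        using residual_near[OF Pol_policy, of "Suc m" i m] residual_near[OF Pol_policy, of "Suc m" i "Suc m"]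
          residual_Pol_iterate[of "Suc m"] by (simp add: distrib_left)
      finally show ?thesis
        by (simp add: g_def)
    qed
    moreover have "g \<longlonglongrightarrow> cA * 0 + 0 + cA * (0 + 0)"
      unfolding g_def
      by (intro tendsto_intros r LIMSEQ_Suc[OF r] summable_LIMSEQ_zero[OF eps_sum])
    ultimately show "residual P V $ i \<le> 0"
      using LIMSEQ_le_const[of g 0 "residual P V $ i"] by simp
  qed
  ultimately show ?thesis
    by (simp add: vec_eq_iff order_antisym)
qed

lemma limit_solves:
  assumes "U \<longlonglongrightarrow> V"
  shows "Hop A y policies V = 0"
proof -
  have "Hop A y policies' V = 0"
    using limit_solves_restricted[OF assms] .
  moreover have "Hop A y policies' V \<le> Hop A y policies V"
    by (rule Hop_mono_policies[OF policies'_subset policies'_nonempty])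
  ultimately show ?thesis
    using compat by (simp add: order_antisym)
qed

theorem converges_to_unique_solution:
  "\<exists>V. Hop A y policies V = 0 \<and> (\<forall>W. Hop A y policies W = 0 \<longrightarrow> W = V) \<and> U \<longlonglongrightarrow> V"
proof -
  obtain V where "U \<longlonglongrightarrow> V"
    using iterates_convergent by (auto simp: convergent_def)
  then show ?thesis
    using limit_solves solution_unique by blast
qed

end

theorem theorem3p10:
  fixes PP PP' :: "'i::finite \<Rightarrow> 'p set"
    and A :: "('i \<Rightarrow> 'p) \<Rightarrow> real^'i^'i"
    and y :: "('i \<Rightarrow> 'p) \<Rightarrow> real^'i"
    and U :: "nat \<Rightarrow> real^'i"
    and Pol :: "nat \<Rightarrow> ('i \<Rightarrow> 'p)"
    and eps :: "nat \<Rightarrow> real"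
  assumes nonempty: "\<And>i. PP i \<noteq> {}"
    and decoupled: "row_decoupled PP A y"
    and H1: "bounded ((\<lambda>P. matrix_inv (A P)) ` {P \<in> Pi UNIV PP. invertible (A P)})"
    and H2A: "bounded (A ` Pi UNIV PP)"
    and H2y: "bounded (y ` Pi UNIV PP)"
    and H3: "\<And>P. P \<in> Pi UNIV PP \<Longrightarrow>
               wdd (A P) \<and> Z_matrix (A P) \<and> (\<forall>i. A P $ i $ i \<ge> 0)
               \<and> (\<forall>i. \<not> sdd_row (A P) i \<longrightarrow> A P $ i $ i \<le> 1)"
    and H4: "\<And>(V::real^'i) i. \<exists>m1 m2::nat. m1 < m2 \<and>
               (Mop PP A y ^^ m1) (\<lambda>j. ereal (V $ j)) i > (Mop PP A y ^^ m2) (\<lambda>j. ereal (V $ j)) i"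
    and sub: "\<And>i. PP' i \<subseteq> PP i" "\<And>i. PP' i \<noteq> {}"
    and nonsing: "\<And>P. P \<in> Pi UNIV PP' \<Longrightarrow> invertible (A P)"
    and compat: "\<And>V. Hop A y (Pi UNIV PP') V = 0 \<Longrightarrow> Hop A y (Pi UNIV PP) V \<le> 0"
    and eps_pos: "\<And>l. l \<ge> 1 \<Longrightarrow> eps l > 0"
    and eps_sum: "summable (\<lambda>l. eps (Suc l))"
    and pol_in: "\<And>l. l \<ge> 1 \<Longrightarrow> Pol l \<in> Pi UNIV PP'"
    and pol_eps: "\<And>l. l \<ge> 1 \<Longrightarrow>
        - (A (Pol l) *v U (l - 1)) + y (Pol l) + eps l *\<^sub>R ones \<ge> Hop A y (Pi UNIV PP') (U (l - 1))"
    and solve: "\<And>l. l \<ge> 1 \<Longrightarrow> A (Pol l) *v U l = y (Pol l)"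
  shows "\<exists>V. Hop A y (Pi UNIV PP) V = 0 \<and> (\<forall>W. Hop A y (Pi UNIV PP) W = 0 \<longrightarrow> W = V)
             \<and> U \<longlonglongrightarrow> V"
proof -
  obtain cA where cA: "\<And>P i j. P \<in> Pi UNIV PP \<Longrightarrow> \<bar>A P $ i $ j\<bar> \<le> cA"
    using bounded_image_entry_bound[OF H2A] by blast
  obtain cy where cy: "\<And>P i. P \<in> Pi UNIV PP \<Longrightarrow> \<bar>y P $ i\<bar> \<le> cy"
    using bounded_image_component_bound[OF H2y] by blast
  obtain cinv where cinv:
    "\<And>P i j. P \<in> {P \<in> Pi UNIV PP. invertible (A P)} \<Longrightarrow> \<bar>matrix_inv (A P) $ i $ j\<bar> \<le> cinv"
    using bounded_image_entry_bound[OF H1] by blast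
  interpret eps_policy_iteration PP A y cA cy cinv PP' U Pol eps
    using nonempty decoupled cA cy cinv H3 H4 sub nonsing compat eps_pos eps_sum pol_in pol_eps solve
    by unfold_locales (auto simp: wdd_Z_matrix_def)
  show ?thesis
    by (rule converges_to_unique_solution)
qed

end
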